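(* Greedy retrieve actions are optimal: let $s_t$ be a state in which the current color $p_t\neq 0$ and there exists a lane $i\in\{1,\dots,L\}$ whose front (rightmost) car has color $B_{t,i,W}=p_t$. Then the retrieve action $a^*=i$ is optimal in $s_t$, i.e., the maximum cumulative reward over all valid action sequences starting in $s_t$ (and leading to the terminal state where upstream sequence and buffer are empty) is attained by a sequence whose first action is $a^*$.
   Context: Paint shop problem with a multi-lane buffer: an upstream sequence of cars with colors in $\{1,\dots,C\}$ is processed in order; the buffer has $L$ lanes, each a first-in-first-out queue of capacity $W$, with $B_{t,i,j}\in\{0,\dots,C\}$ the color at position $j$ of lane $i$ at time $t$ (0 = empty, position $W$ is the front/exit of the lane, new cars enter at the rightmost empty position). $e_{t,1}$ is the color of the next upstream car (0 if the upstream sequence is empty), and $p_t\in\{0,\dots,C\}$ is the color of the last car appended to the downstream sequence (0 initially). Actions: $a\in\{1,\dots,L\}$ retrieves the front car of lane $a$ and appends it to the downstream sequence (setting $p_{t+1}=B_{t,a,W}$); $a\in\{L+1,\dots,2L\}$ stores the next upstream car in lane $a-L$ (leaving $p$ unchanged). Reward: $r(s_t,a)=1$ for a valid retrieval with $B_{t,a,W}=p_t$; $0$ for a valid retrieval with $B_{t,a,W}\neq p_t$; $0$ for a valid store; $-10$ for an invalid action (retrieving from an empty lane, storing into a full lane, or storing when the upstream sequence is empty). The cumulative reward of actions $a_1,\dots,a_n$ from state $s_0$ is $r(s_0,a_1,\dots,a_n)=\sum_{t=0}^{n-1} r(s_t,a_{t+1})$, where $s_{t+1}$ results from applying $a_{t+1}$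 in $s_t$. An action $a^*$ is optimal in $s_t$ if $\max_{a_1,\dots,a_n}r(s_t,a^*,a_1,\dots,a_n)\ge r(s_t,a',a'_1,\dots,a'_n)$ for all actions $a',a'_1,\dots,a'_n$. *)

theory Defs
  imports Main
begin

text \<open>A state consists of
  \<^item> lane i (for i in 1..L): the cars currently in lane i, listed from the FRONT
    (exit, position W) backwards; i.e. the list [B i W, B i (W-1), ...] of the
    nonzero entries of row i of the buffer matrix.  Empty positions (colour 0)
    are not listed.
  \<^item> upstream: the remaining upstream sequence (its head is e_{t,1});
  \<^item> prev: the colour p_t of the last car appended downstream (0 initially).\<close>

record pstate =
  lane :: "nat \<Rightarrow> nat list"
  upstream :: "nat list"
  prev :: nat

definition wf_state :: "nat \<Rightarrow> nat \<Rightarrow> nat \<Rightarrow> pstate \<Rightarrow> bool" where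
  "wf_state L W C s \<longleftrightarrow>
     (\<forall>i\<in>{1..L}. length (lane s i) \<le> W \<and> set (lane s i) \<subseteq> {1..C}) \<and>
     set (upstream s) \<subseteq> {1..C} \<and> prev s \<le> C"

text \<open>Actions 1..L retrieve from lane a; actions L+1..2L store into lane a-L.\<close>
definition valid_action :: "nat \<Rightarrow> nat \<Rightarrow> pstate \<Rightarrow> nat \<Rightarrow> bool" where
  "valid_action L W s a \<longleftrightarrow>
     (1 \<le> a \<and> a \<le> L \<and> lane s a \<noteq> []) \<or>
     (L < a \<and> a \<le> 2 * L \<and> upstream s \<noteq> [] \<and> length (lane s (a - L)) < W)"

definition step :: "nat \<Rightarrow> nat \<Rightarrow> pstate \<Rightarrow> nat \<Rightarrow> pstate" where
  "step L W s a =
     (if \<not> valid_action L W s a then s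
      else if a \<le> L then
        s\<lparr>lane := (lane s)(a := tl (lane s a)), prev := hd (lane s a)\<rparr>
      else
        s\<lparr>lane := (lane s)(a - L := lane s (a - L) @ [hd (upstream s)]),
          upstream := tl (upstream s)\<rparr>)"

definition reward :: "nat \<Rightarrow> nat \<Rightarrow> pstate \<Rightarrow> nat \<Rightarrow> int" where
  "reward L W s a =
     (if \<not> valid_action L W s a then -10
      else if a \<le> L \<and> hd (lane s a) = prev s then 1 else 0)"

fun run :: "nat \<Rightarrow> nat \<Rightarrow> pstate \<Rightarrow> nat list \<Rightarrow> pstate" where
  "run L W s [] = s"
| "run L W s (a # as) = run L W (step L W s a) as"

fun cum_reward :: "nat \<Rightarrow> nat \<Rightarrow> pstate \<Rightarrow> nat list \<Rightarrow> int" where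
  "cum_reward L W s [] = 0"
| "cum_reward L W s (a # as) = reward L W s a + cum_reward L W (step L W s a) as"

fun valid_seq :: "nat \<Rightarrow> nat \<Rightarrow> pstate \<Rightarrow> nat list \<Rightarrow> bool" where
  "valid_seq L W s [] = True"
| "valid_seq L W s (a # as) = (valid_action L W s a \<and> valid_seq L W (step L W s a) as)"

definition terminal :: "nat \<Rightarrow> pstate \<Rightarrow> bool" where
  "terminal L s \<longleftrightarrow> upstream s = [] \<and> (\<forall>i\<in>{1..L}. lane s i = [])"

end

theory Submission
  imports Defs
begin

text \<open>Take any valid action sequence that empties the buffer. Lane \<open>i\<close> must be emptied,
  so the sequence has the form \<open>xs @ i # ys\<close> where \<open>xs\<close> never retrieves from lane \<open>i\<close>;
  hence \<open>xs\<close> leaves the front car of lane \<open>i\<close>, of colour \<open>p\<^sub>t\<close>, in place. Moving that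
  retrieval to the front gives \<open>i # xs @ ys\<close>: it earns 1 at once, \<open>xs\<close> earns the same as
  before, and afterwards the two runs are in states differing only in the last colour.
  That difference costs at most 1 in the rest of the run, and only when the original
  retrieval from lane \<open>i\<close> earned 0.\<close>

definition pop_lane :: "nat \<Rightarrow> pstate \<Rightarrow> pstate" where
  "pop_lane i s = s\<lparr>lane := (lane s)(i := tl (lane s i))\<rparr>"

lemma run_append: "run L W s (xs @ ys) = run L W (run L W s xs) ys"
  by (induction xs arbitrary: s) auto

lemma cum_reward_append:
  "cum_reward L W s (xs @ ys) = cum_reward L W s xs + cum_reward L W (run L W s xs) ys"
  by (induction xs arbitrary: s) auto

lemma valid_seq_append:
  "valid_seq L W s (xs @ ys) \<longleftrightarrow> valid_seq L W s xs \<and> valid_seq L W (run L W s xs) ys"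
  by (induction xs arbitrary: s) auto

lemma terminal_prev_update [simp]: "terminal L (s\<lparr>prev := q\<rparr>) \<longleftrightarrow> terminal L s"
  by (simp add: terminal_def)

lemma step_retrieve:
  assumes "a \<in> {1..L}" "lane s a \<noteq> []"
  shows "step L W s a = (pop_lane a s)\<lparr>prev := hd (lane s a)\<rparr>"
    and "reward L W s a = of_bool (hd (lane s a) = prev s)"
  using assms by (auto simp: step_def reward_def valid_action_def pop_lane_def)

lemma valid_action_prev_update [simp]:
  "valid_action L W (s\<lparr>prev := q\<rparr>) a \<longleftrightarrow> valid_action L W s a"
  by (simp add: valid_action_def)

lemma step_prev_update:
  "step L W (s\<lparr>prev := q\<rparr>) a =
     (if valid_action L W s a \<and> a \<le> L then step L W s a else (step L W s a)\<lparr>prev := q\<rparr>)"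
  by (simp add: step_def)

lemma valid_seq_prev_update [simp]:
  "valid_seq L W (s\<lparr>prev := q\<rparr>) as \<longleftrightarrow> valid_seq L W s as"
  by (induction as arbitrary: s) (auto simp: step_prev_update)

lemma run_prev_update: "\<exists>q'. run L W (s\<lparr>prev := q\<rparr>) as = (run L W s as)\<lparr>prev := q'\<rparr>"
proof (induction as arbitrary: s)
  case Nil
  then show ?case by auto
next
  case (Cons a as)
  show ?case
  proof (cases "valid_action L W s a \<and> a \<le> L")
    case True
    then have "run L W (s\<lparr>prev := q\<rparr>) (a # as) = (run L W s (a # as))\<lparr>prev := prev (run L W s (a # as))\<rparr>"
      by (simp add: step_prev_update)
    then show ?thesis by blast
  next
    case False
    then have "step L W (s\<lparr>prev := q\<rparr>) a = (step L W s a)\<lparr>prev := q\<rparr>"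
      by (subst step_prev_update) (rule if_not_P)
    then show ?thesis using Cons.IH[of "step L W s a"] by simp
  qed
qed

text \<open>Only the first retrieval sees the last colour; after it the two runs coincide.\<close>

lemma cum_reward_prev_update_le:
  "cum_reward L W (s\<lparr>prev := q\<rparr>) as \<le> cum_reward L W s as + 1"
proof (induction as arbitrary: s)
  case Nil
  then show ?case by simp
next
  case (Cons a as)
  show ?case
  proof (cases "valid_action L W s a \<and> a \<le> L")
    case True
    then show ?thesis by (simp add: step_prev_update reward_def)
  next
    case False
    then have "reward L W (s\<lparr>prev := q\<rparr>) a = reward L W s a"
      by (simp add: reward_def)
    then show ?thesis using False Cons.IH[of "step L W s a"] by (simp add: step_prev_update)
  qed
qed

lemma lane_run_front_unchanged:
  assumes "lane s i \<noteq> []" "i \<notin> set xs"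
  shows "lane (run L W s xs) i \<noteq> [] \<and> hd (lane (run L W s xs) i) = hd (lane s i)"
  using assms
proof (induction xs arbitrary: s)
  case Nil
  then show ?case by simp
next
  case (Cons a xs)
  have "lane (step L W s a) i \<noteq> [] \<and> hd (lane (step L W s a) i) = hd (lane s i)"
    using Cons.prems by (cases "lane s i") (auto simp: step_def)
  then show ?case using Cons by simp
qed

lemma retrieves_from_nonempty_lane:
  assumes "i \<in> {1..L}" "lane s i \<noteq> []" "terminal L (run L W s as)"
  shows "i \<in> set as"
  using assms lane_run_front_unchanged[of s i as L W] by (auto simp: terminal_def)

lemma step_pop_lane:
  assumes "valid_action L W s a" "a \<noteq> i" "lane s i \<noteq> []"
  shows "valid_action L W (pop_lane i s) a"
    and "reward L W (pop_lane i s) a = reward L W s a"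
    and "step L W (pop_lane i s) a = pop_lane i (step L W s a)"
proof -
  show valid: "valid_action L W (pop_lane i s) a"
    using assms by (auto simp: valid_action_def pop_lane_def)
  show "reward L W (pop_lane i s) a = reward L W s a"
    using assms valid by (auto simp: reward_def pop_lane_def)
  show "step L W (pop_lane i s) a = pop_lane i (step L W s a)"
    using assms valid by (cases "lane s i") (auto simp: step_def pop_lane_def fun_eq_iff)
qed

lemma run_pop_lane:
  assumes "valid_seq L W s xs" "i \<notin> set xs" "lane s i \<noteq> []"
  shows "valid_seq L W (pop_lane i s) xs \<and>
    cum_reward L W (pop_lane i s) xs = cum_reward L W s xs \<and>
    run L W (pop_lane i s) xs = pop_lane i (run L W s xs)"
  using assms
proof (induction xs arbitrary: s)
  case Nil
  then show ?case by simp
next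
  case (Cons a xs)
  have "lane (step L W s a) i \<noteq> []"
    using lane_run_front_unchanged[of s i "[a]"] Cons.prems by simp
  with Cons step_pop_lane[of L W s a i] show ?case by simp
qed

lemma retrieve_first_exchange:
  assumes i: "i \<in> {1..L}" "lane s i \<noteq> []" "hd (lane s i) = prev s"
    and xs: "i \<notin> set xs" and valid: "valid_seq L W s (xs @ i # ys)"
  shows "valid_seq L W s (i # xs @ ys)"
    and "\<exists>q. run L W s (xs @ i # ys) = (run L W s (i # xs @ ys))\<lparr>prev := q\<rparr>"
    and "cum_reward L W s (xs @ i # ys) \<le> cum_reward L W s (i # xs @ ys)"
proof -
  define t where "t = run L W s xs"
  define u where "u = pop_lane i t"
  have valid_xs: "valid_seq L W s xs" using valid by (simp add: valid_seq_append)
  have front_t: "lane t i \<noteq> []" "hd (lane t i) = prev s"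
    using lane_run_front_unchanged[OF i(2) xs] i(3) by (simp_all add: t_def)
  have step_s: "step L W s i = pop_lane i s"
    using step_retrieve(1)[OF i(1,2)] i(3) by (simp add: pop_lane_def)
  have step_t: "step L W t i = u\<lparr>prev := prev s\<rparr>"
    using step_retrieve(1)[OF i(1) front_t(1)] front_t(2) by (simp add: u_def)
  have run_new: "run L W s (i # xs @ ys) = run L W u ys"
    using run_pop_lane[OF valid_xs xs i(2)] step_s by (simp add: run_append t_def u_def)
  have run_old: "run L W s (xs @ i # ys) = run L W (u\<lparr>prev := prev s\<rparr>) ys"
    using step_t by (simp add: run_append t_def)
  have valid_ys: "valid_seq L W (u\<lparr>prev := prev s\<rparr>) ys"
    using valid step_t by (simp add: valid_seq_append t_def)
  show "valid_seq L W s (i # xs @ ys)"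
    using valid_ys run_pop_lane[OF valid_xs xs i(2)] step_s i(1,2)
    by (simp add: valid_seq_append valid_action_def t_def u_def)
  show "\<exists>q. run L W s (xs @ i # ys) = (run L W s (i # xs @ ys))\<lparr>prev := q\<rparr>"
    unfolding run_old run_new by (rule run_prev_update)
  have "reward L W t i + cum_reward L W (u\<lparr>prev := prev s\<rparr>) ys \<le> 1 + cum_reward L W u ys"
  proof (cases "prev s = prev t")
    case True
    then have "u\<lparr>prev := prev s\<rparr> = u" by (simp add: u_def pop_lane_def)
    then show ?thesis using step_retrieve(2)[OF i(1) front_t(1)] front_t(2) by simp
  next
    case False
    then show ?thesis
      using step_retrieve(2)[OF i(1) front_t(1)] front_t(2)
        cum_reward_prev_update_le[where L = L and W = W and s = u and q = "prev s" and as = ys]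
      by simp
  qed
  moreover have "cum_reward L W s (i # xs @ ys) = 1 + cum_reward L W s xs + cum_reward L W u ys"
    using step_retrieve(2)[OF i(1,2)] i(3) step_s run_pop_lane[OF valid_xs xs i(2)]
    by (simp add: cum_reward_append t_def u_def)
  ultimately show "cum_reward L W s (xs @ i # ys) \<le> cum_reward L W s (i # xs @ ys)"
    using step_t by (simp add: cum_reward_append t_def)
qed

text \<open>The argument never looks at colours.\<close>

theorem theorem2:
  fixes L W C :: nat and s :: pstate and i :: nat
  assumes "wf_state L W C s"
    and "prev s \<noteq> 0"
    and "i \<in> {1..L}"
    and "lane s i \<noteq> []"
    and "hd (lane s i) = prev s"
  shows "\<forall>as. valid_seq L W s as \<and> terminal L (run L W s as) \<longrightarrow>
           (\<exists>bs. valid_seq L W s (i # bs) \<and> terminal L (run L W s (i # bs)) \<and>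
                 cum_reward L W s (i # bs) \<ge> cum_reward L W s as)"
proof (intro allI impI)
  fix as
  assume as: "valid_seq L W s as \<and> terminal L (run L W s as)"
  then have "i \<in> set as"
    using retrieves_from_nonempty_lane assms(3,4) by blast
  then obtain xs ys where split: "as = xs @ i # ys" and "i \<notin> set xs"
    by (metis split_list_first)
  note exchange = retrieve_first_exchange[OF assms(3-5) \<open>i \<notin> set xs\<close>, where ys = ys]
  have "terminal L (run L W s (i # xs @ ys))"
    using as exchange(2) split by force
  then show "\<exists>bs. valid_seq L W s (i # bs) \<and> terminal L (run L W s (i # bs)) \<and>
                 cum_reward L W s (i # bs) \<ge> cum_reward L W s as"
    using as exchange(1,3) split by blast
qed

end
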